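(* Let $v\in M_N(\mathbb{C})$ and let $g(t)=e^{tv}$, $t\in[0,1]$. Then $g$ is an extremal of the $p$-energy functional, i.e. its left-translated velocity $g^{-1}(t)\dot g(t)$ satisfies the Euler–Lagrange equation $$\frac{d}{dt}\, v(t)(v(t)^*v(t))^{n-1}=(v(t)^*v(t))^n-(v(t)v(t)^* )^n,\qquad v(t)=g^{-1}(t)\dot g(t),$$ if and only if $v$ is normal, i.e. $vv^*=v^*v$.
   Context: $p=2n\ge 2$ is a fixed even integer. $G=GL(N)$ is the group of invertible complex $N\times N$ matrices, an open subset of $\mathcal A=M_N(\mathbb C)$. $\tau(x)=\frac1N\operatorname{Re}\operatorname{Tr}(x)$ is the normalized real part of the trace, $|x|=(x^*x)^{1/2}$, and $\|x\|_p=\tau(|x|^p)^{1/p}$. For a smooth curve $g:[0,1]\to G$, the $p$-energy is $\mathcal E_p(g)=\int_0^1\tau\big((v^*v)^n\big)\,dt$ with $v=g^{-1}\dot g$; the displayed Euler–Lagrange equation is the condition for $g$ to be a critical point of $\mathcal E_p$ under variations with fixed endpoints. *)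

theory Defs
  imports "HOL-Analysis.Analysis"
begin

text \<open>N x N complex matrices are modelled as complex^'N^'N, with 'N a finite index type
  (so N = CARD('N)). Matrix product is **, identity is mat 1, inverse is matrix_inv.\<close>

definition cadj :: "complex^'n^'m \<Rightarrow> complex^'m^'n" where
  "cadj A = (\<chi> i j. cnj (A $ j $ i))"

primrec mpow :: "complex^'n^'n \<Rightarrow> nat \<Rightarrow> complex^'n^'n" where
  "mpow A 0 = mat 1"
| "mpow A (Suc k) = A ** mpow A k"

text \<open>Matrix exponential via its power series (converges in the finite-dimensional Banach space).\<close>
definition mexp :: "complex^'n^'n \<Rightarrow> complex^'n^'n" where
  "mexp A = (\<Sum>k. (1 / fact k) *\<^sub>R mpow A k)"

definition normal_mat :: "complex^'n^'n \<Rightarrow> bool" where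
  "normal_mat A \<longleftrightarrow> A ** cadj A = cadj A ** A"

definition left_vel :: "(real \<Rightarrow> complex^'n^'n) \<Rightarrow> real \<Rightarrow> complex^'n^'n" where
  "left_vel g t = matrix_inv (g t) ** vector_derivative g (at t within {0..1})"

text \<open>Euler--Lagrange equation of the p-energy, p = 2n, for a curve g on [0,1]:
  d/dt [ w (w^* w)^(n-1) ] = (w^* w)^n - (w w^*)^n with w = g^{-1} g'.\<close>
definition pEL :: "nat \<Rightarrow> (real \<Rightarrow> complex^'n^'n) \<Rightarrow> bool" where
  "pEL n g \<longleftrightarrow> (\<forall>t\<in>{0..1}.
     ((\<lambda>s. left_vel g s ** mpow (cadj (left_vel g s) ** left_vel g s) (n - 1))
       has_vector_derivative
        (mpow (cadj (left_vel g t) ** left_vel g t) n - mpow (left_vel g t ** cadj (left_vel g t)) n))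
       (at t within {0..1}))"

end

theory Submission
  imports Defs
begin

text \<open>Along \<open>g(t) = exp (t v)\<close> the left-translated velocity is constantly \<open>v\<close>, so the
  Euler--Lagrange equation says that the derivative of a constant equals
  \<open>(v\<^sup>* v)^n - (v v\<^sup>*)^n\<close>, i.e. that \<open>(v\<^sup>* v)^n = (v v\<^sup>*)^n\<close>. For positive semidefinite
  \<open>P = v\<^sup>* v\<close>, \<open>Q = v v\<^sup>*\<close> and \<open>D = P - Q\<close> the telescoping identity
  \<open>tr (D (P^n - Q^n)) = \<Sum>k<n. tr (D P^k D Q^(n-1-k))\<close> writes \<open>0\<close> as a sum of squared Frobenius
  norms; the extreme terms force \<open>P D = Q D = 0\<close>, hence \<open>D\<^sup>* D = D D = 0\<close> and \<open>P = Q\<close>.\<close>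

section \<open>Bounded endomorphisms as a Banach algebra\<close>

text \<open>Square matrices carry no Banach algebra instance, so the exponential and its derivative are
  borrowed from the algebra of bounded endomorphisms via \<open>endo_of_matrix\<close> below.\<close>

typedef (overloaded) 'a endo = "UNIV :: ('a::euclidean_space \<Rightarrow>\<^sub>L 'a) set"
  morphisms blinfun_of_endo endo_of_blinfun
  by simp

setup_lifting type_definition_endo

instantiation endo :: (euclidean_space) real_normed_algebra_1
begin
lift_definition zero_endo :: "'a endo" is 0 .
lift_definition one_endo :: "'a endo" is id_blinfun .
lift_definition plus_endo :: "'a endo \<Rightarrow> 'a endo \<Rightarrow> 'a endo" is "(+)" .
lift_definition minus_endo :: "'a endo \<Rightarrow> 'a endo \<Rightarrow> 'a endo" is "(-)" .
lift_definition uminus_endo :: "'a endo \<Rightarrow> 'a endo" is uminus .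
lift_definition times_endo :: "'a endo \<Rightarrow> 'a endo \<Rightarrow> 'a endo" is blinfun_compose .
lift_definition scaleR_endo :: "real \<Rightarrow> 'a endo \<Rightarrow> 'a endo" is scaleR .
lift_definition norm_endo :: "'a endo \<Rightarrow> real" is norm .
definition dist_endo :: "'a endo \<Rightarrow> 'a endo \<Rightarrow> real" where "dist_endo a b = norm (a - b)"
definition sgn_endo :: "'a endo \<Rightarrow> 'a endo" where "sgn_endo a = inverse (norm a) *\<^sub>R a"
definition uniformity_endo :: "('a endo \<times> 'a endo) filter" where
  "uniformity_endo = (INF e\<in>{0<..}. principal {(a, b). dist a b < e})"
definition open_endo :: "'a endo set \<Rightarrow> bool" where
  "open_endo U = (\<forall>a\<in>U. \<forall>\<^sub>F (a', b) in uniformity. a' = a \<longrightarrow> b \<in> U)"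

instance
proof
  fix a b c :: "'a endo" and r s :: real and U :: "'a endo set"
  show "a + b + c = a + (b + c)" by transfer (simp add: algebra_simps)
  show "a + b = b + a" by transfer (simp add: algebra_simps)
  show "0 + a = a" by transfer simp
  show "- a + a = 0" by transfer simp
  show "a - b = a + - b" by transfer simp
  show "r *\<^sub>R (a + b) = r *\<^sub>R a + r *\<^sub>R b" by transfer (simp add: algebra_simps)
  show "(r + s) *\<^sub>R a = r *\<^sub>R a + s *\<^sub>R a" by transfer (simp add: algebra_simps)
  show "r *\<^sub>R s *\<^sub>R a = (r * s) *\<^sub>R a" by transfer simp
  show "1 *\<^sub>R a = a" by transfer simp
  show "a * b * c = a * (b * c)" "1 * a = a" "a * 1 = a"
    by (transfer; auto intro: blinfun_eqI)+
  show "(a + b) * c = a * c + b * c" "a * (b + c) = a * b + a * c"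
    "r *\<^sub>R a * b = r *\<^sub>R (a * b)" "a * r *\<^sub>R b = r *\<^sub>R (a * b)"
    by (transfer; auto intro: blinfun_eqI simp: blinfun.bilinear_simps)+
  show "(0::'a endo) \<noteq> 1"
  proof transfer
    obtain x :: 'a where "x \<noteq> 0" using nonzero_Basis by blast
    then show "0 \<noteq> (id_blinfun :: 'a \<Rightarrow>\<^sub>L 'a)" by (metis blinfun.zero_left blinfun_apply_id_blinfun)
  qed
  show "norm (a * b) \<le> norm a * norm b" by transfer (rule norm_blinfun_compose)
  show "norm (a + b) \<le> norm a + norm b" by transfer (rule norm_triangle_ineq)
  show "norm (1::'a endo) = 1" "(norm a = 0) = (a = 0)" "norm (r *\<^sub>R a) = \<bar>r\<bar> * norm a"
    by (transfer; simp)+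
  show "dist a b = norm (a - b)" "sgn a = inverse (norm a) *\<^sub>R a"
    "uniformity = (INF e\<in>{0<..}. principal {(a, b :: 'a endo). dist a b < e})"
    "open U = (\<forall>a\<in>U. \<forall>\<^sub>F (a', b) in uniformity. a' = a \<longrightarrow> b \<in> U)"
    by (simp_all add: dist_endo_def sgn_endo_def uniformity_endo_def open_endo_def)
qed

end

lemma bounded_linear_blinfun_of_endo: "bounded_linear blinfun_of_endo"
proof
  fix a b :: "'a endo" and r :: real
  show "blinfun_of_endo (a + b) = blinfun_of_endo a + blinfun_of_endo b"
    by (rule plus_endo.rep_eq)
  show "blinfun_of_endo (r *\<^sub>R a) = r *\<^sub>R blinfun_of_endo a"
    by (rule scaleR_endo.rep_eq)
  show "\<exists>K. \<forall>a. norm (blinfun_of_endo a) \<le> norm a * K"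
    by (rule exI[of _ 1]) (simp add: norm_endo.rep_eq)
qed

lemma dist_blinfun_of_endo: "dist (blinfun_of_endo a) (blinfun_of_endo b) = dist a b"
  by (simp add: dist_endo_def dist_norm norm_endo.rep_eq minus_endo.rep_eq)

instance endo :: (euclidean_space) banach
proof
  fix X :: "nat \<Rightarrow> 'a endo"
  assume "Cauchy X"
  then have "Cauchy (\<lambda>k. blinfun_of_endo (X k))"
    by (simp add: Cauchy_def dist_blinfun_of_endo)
  then obtain L where "(\<lambda>k. blinfun_of_endo (X k)) \<longlonglongrightarrow> L"
    using convergent_eq_Cauchy by blast
  then have "X \<longlonglongrightarrow> endo_of_blinfun L"
    unfolding tendsto_iff by (simp add: dist_blinfun_of_endo[symmetric] endo_of_blinfun_inverse)
  then show "convergent X" by (auto simp: convergent_def)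
qed

lemma bounded_linear_vec_lambda:
  assumes "\<And>i. bounded_linear (\<lambda>x. f x i)"
  shows "bounded_linear (\<lambda>x. \<chi> i. f x i)"
proof
  interpret f: bounded_linear "\<lambda>x. f x i" for i by (rule assms)
  fix x y and r :: real
  show "(\<chi> i. f (x + y) i) = (\<chi> i. f x i) + (\<chi> i. f y i)"
    "(\<chi> i. f (r *\<^sub>R x) i) = r *\<^sub>R (\<chi> i. f x i)"
    by (simp_all add: vec_eq_iff f.add f.scaleR)
  obtain K where K: "\<And>i x. norm (f x i) \<le> norm x * K i"
    using f.bounded by metis
  have "norm (\<chi> i. f x i) \<le> norm x * (\<Sum>i\<in>UNIV. K i)" for x
  proof -
    have "norm (\<chi> i. f x i) \<le> (\<Sum>i\<in>UNIV. norm (f x i))"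
      by (simp add: norm_vec_def L2_set_le_sum)
    also have "\<dots> \<le> norm x * (\<Sum>i\<in>UNIV. K i)"
      by (simp add: sum_distrib_left sum_mono K)
    finally show ?thesis .
  qed
  then show "\<exists>C. \<forall>x. norm (\<chi> i. f x i) \<le> norm x * C" by blast
qed

lemma bounded_linear_matrix_vector_mult:
  "bounded_linear (\<lambda>x::complex^'n. (A::complex^'n^'m) *v x)"
  by (simp add: linear_conv_bounded_linear[symmetric])

definition endo_of_matrix :: "complex^'n^'n \<Rightarrow> (complex^'n) endo" where
  "endo_of_matrix A = endo_of_blinfun (Blinfun (\<lambda>x. A *v x))"

text \<open>Only a left inverse of \<open>endo_of_matrix\<close>: a real-linear endomorphism need not be complex-linear.\<close>
definition matrix_of_endo :: "(complex^'n) endo \<Rightarrow> complex^'n^'n" where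
  "matrix_of_endo f = matrix (blinfun_apply (blinfun_of_endo f))"

lemma blinfun_apply_endo_of_matrix: "blinfun_apply (blinfun_of_endo (endo_of_matrix A)) x = A *v x"
  by (simp add: endo_of_matrix_def endo_of_blinfun_inverse
      bounded_linear_Blinfun_apply[OF bounded_linear_matrix_vector_mult])

lemma matrix_of_endo_of_matrix [simp]: "matrix_of_endo (endo_of_matrix A) = A"
  by (simp add: matrix_of_endo_def blinfun_apply_endo_of_matrix[abs_def])

lemma endo_of_matrix_eqI:
  assumes "\<And>x. A *v x = blinfun_apply (blinfun_of_endo f) x"
  shows "endo_of_matrix A = f"
  by (metis assms blinfun_apply_endo_of_matrix blinfun_eqI blinfun_of_endo_inject)

lemma endo_of_matrix_mult: "endo_of_matrix (A ** B) = endo_of_matrix A * endo_of_matrix B"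
  by (rule endo_of_matrix_eqI) (simp add: times_endo.rep_eq blinfun_apply_endo_of_matrix matrix_vector_mul_assoc)

lemma endo_of_matrix_one: "endo_of_matrix (mat 1) = 1"
  by (rule endo_of_matrix_eqI) (simp add: one_endo.rep_eq)

lemma endo_of_matrix_mpow: "endo_of_matrix (mpow A k) = endo_of_matrix A ^ k"
  by (induct k) (simp_all add: endo_of_matrix_one endo_of_matrix_mult)

lemma bounded_linear_endo_of_matrix: "bounded_linear endo_of_matrix"
proof -
  have "linear (endo_of_matrix :: complex^'n^'n \<Rightarrow> _)"
    by (intro linearI; rule endo_of_matrix_eqI)
      (simp_all add: plus_endo.rep_eq scaleR_endo.rep_eq blinfun_apply_endo_of_matrix
        blinfun.bilinear_simps matrix_vector_mult_add_rdistrib vec_eq_iff matrix_vector_mult_def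
        scaleR_sum_right sum.distrib distrib_right)
  then show ?thesis by (simp add: linear_conv_bounded_linear)
qed

lemma bounded_linear_matrix_of_endo: "bounded_linear matrix_of_endo"
  unfolding matrix_of_endo_def matrix_def
  by (intro bounded_linear_vec_lambda bounded_linear_compose[OF bounded_linear_vec_nth]
      bounded_linear_compose[OF blinfun.bounded_linear_left] bounded_linear_blinfun_of_endo)

lemma endo_of_matrix_scaleR: "endo_of_matrix (r *\<^sub>R A) = r *\<^sub>R endo_of_matrix A"
  by (rule linear.scaleR[OF bounded_linear.linear[OF bounded_linear_endo_of_matrix]])

lemma endo_of_matrix_uminus: "endo_of_matrix (- A) = - endo_of_matrix A"
  by (rule linear_neg[OF bounded_linear.linear[OF bounded_linear_endo_of_matrix]])

lemma matrix_of_endo_scaleR: "matrix_of_endo (r *\<^sub>R f) = r *\<^sub>R matrix_of_endo f"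
  by (rule linear.scaleR[OF bounded_linear.linear[OF bounded_linear_matrix_of_endo]])

lemma mexp_sums: "(\<lambda>k. mpow A k /\<^sub>R fact k) sums mexp A"
proof -
  have "(\<lambda>k. matrix_of_endo (endo_of_matrix A ^ k /\<^sub>R fact k))
          sums matrix_of_endo (exp (endo_of_matrix A))"
    by (rule bounded_linear.sums[OF bounded_linear_matrix_of_endo exp_converges])
  then have "summable (\<lambda>k. mpow A k /\<^sub>R fact k)"
    by (auto simp: sums_iff matrix_of_endo_scaleR endo_of_matrix_mpow[symmetric])
  then show ?thesis by (simp add: mexp_def summable_sums divide_inverse_commute)
qed

lemma endo_of_matrix_mexp: "endo_of_matrix (mexp A) = exp (endo_of_matrix A)"
  using bounded_linear.sums[OF bounded_linear_endo_of_matrix mexp_sums[of A]]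
    exp_converges[of "endo_of_matrix A"]
  by (simp add: endo_of_matrix_scaleR endo_of_matrix_mpow sums_unique2)

lemma mexp_scaleR_has_vector_derivative:
  "((\<lambda>t. mexp (t *\<^sub>R A)) has_vector_derivative mexp (t *\<^sub>R A) ** A) (at t within S)"
proof -
  have exp_eq: "exp (s *\<^sub>R endo_of_matrix A) = endo_of_matrix (mexp (s *\<^sub>R A))" for s
    by (simp add: endo_of_matrix_mexp endo_of_matrix_scaleR)
  have "((\<lambda>s. matrix_of_endo (exp (s *\<^sub>R endo_of_matrix A))) has_vector_derivative
          matrix_of_endo (exp (t *\<^sub>R endo_of_matrix A) * endo_of_matrix A)) (at t within S)"
    using bounded_linear.has_derivative[OF bounded_linear_matrix_of_endo
        exp_scaleR_has_vector_derivative_right[unfolded has_vector_derivative_def]]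
    by (simp add: has_vector_derivative_def matrix_of_endo_scaleR)
  then show ?thesis
    by (simp add: exp_eq flip: endo_of_matrix_mult)
qed

lemma endo_of_matrix_inject: "endo_of_matrix A = endo_of_matrix B \<longleftrightarrow> A = B"
  by (metis matrix_of_endo_of_matrix)

lemma mexp_mult_mexp_uminus: "mexp A ** mexp (- A) = mat 1"
  by (simp add: endo_of_matrix_inject[symmetric] endo_of_matrix_mult endo_of_matrix_mexp
      endo_of_matrix_one endo_of_matrix_uminus exp_minus_inverse)

lemma matrix_inv_mult_left:
  fixes A :: "'a::semiring_1^'n^'m"
  assumes "A ** B = mat 1" and "B ** A = mat 1"
  shows "matrix_inv A ** A = mat 1"
  unfolding matrix_inv_def by (rule someI2[where a=B]) (use assms in auto)

lemma left_vel_mexp_scaleR: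
  assumes "t \<in> {0..1}"
  shows "left_vel (\<lambda>t. mexp (t *\<^sub>R A)) t = A"
proof -
  have "vector_derivative (\<lambda>t. mexp (t *\<^sub>R A)) (at t within {0..1}) = mexp (t *\<^sub>R A) ** A"
    using vector_derivative_within_closed_interval[OF _ assms mexp_scaleR_has_vector_derivative] by simp
  moreover have "matrix_inv (mexp (t *\<^sub>R A)) ** mexp (t *\<^sub>R A) = mat 1"
    using mexp_mult_mexp_uminus[of "t *\<^sub>R A"] mexp_mult_mexp_uminus[of "- (t *\<^sub>R A)"]
    by (intro matrix_inv_mult_left) auto
  ultimately show ?thesis
    by (simp add: left_vel_def matrix_mul_assoc)
qed

section \<open>Equal powers of Gram matrices\<close>

lemma matrix_add_rdistrib: "((A::'a::semiring_1^'n^'m) + B) ** C = A ** C + B ** C"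
  by (simp add: vec_eq_iff matrix_matrix_mult_def sum.distrib distrib_right)

lemma matrix_diff_ldistrib: "(A::'a::ring_1^'n^'m) ** (B - C) = A ** B - A ** C"
  by (simp add: vec_eq_iff matrix_matrix_mult_def sum_subtractf right_diff_distrib)

lemma matrix_diff_rdistrib: "((A::'a::ring_1^'n^'m) - B) ** C = A ** C - B ** C"
  by (simp add: vec_eq_iff matrix_matrix_mult_def sum_subtractf left_diff_distrib)

lemma matrix_sum_ldistrib: "(A::'a::semiring_1^'n^'m) ** (\<Sum>k\<in>S. f k) = (\<Sum>k\<in>S. A ** f k)"
  by (induct S rule: infinite_finite_induct) (simp_all add: matrix_add_ldistrib)

lemma matrix_sum_rdistrib: "(\<Sum>k\<in>S. f k) ** (B::'a::semiring_1^'n^'m) = (\<Sum>k\<in>S. f k ** B)"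
  by (induct S rule: infinite_finite_induct) (simp_all add: matrix_add_rdistrib)

lemma trace_sum: "trace (\<Sum>k\<in>S. f k :: 'a::comm_semiring_1^'n^'n) = (\<Sum>k\<in>S. trace (f k))"
  by (induct S rule: infinite_finite_induct) (simp_all add: trace_add trace_0[simplified])

lemma cadj_mult: "cadj (A ** B) = cadj B ** cadj A"
  by (simp add: cadj_def vec_eq_iff matrix_matrix_mult_def mult.commute)

lemma cadj_cadj [simp]: "cadj (cadj A) = A"
  by (simp add: cadj_def vec_eq_iff)

lemma cadj_diff: "cadj (A - B) = cadj A - cadj B"
  by (simp add: cadj_def vec_eq_iff)

lemma cadj_0 [simp]: "cadj 0 = 0"
  by (simp add: cadj_def vec_eq_iff)

lemma cadj_mat_1 [simp]: "cadj (mat 1) = mat 1"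
  by (simp add: cadj_def vec_eq_iff mat_def)

lemma mpow_add: "mpow A (k + l) = mpow A k ** mpow A l"
  by (induct k) (simp_all add: matrix_mul_assoc)

lemma mpow_Suc_right: "mpow A (Suc k) = mpow A k ** A"
  using mpow_add[of A k 1] by simp

lemma mpow_commute: "mpow A k ** A = A ** mpow A k"
  by (metis mpow.simps(2) mpow_Suc_right)

lemma cadj_mpow: "cadj (mpow A k) = mpow (cadj A) k"
  by (induct k) (simp_all add: cadj_mult mpow_commute)

lemma trace_cadj_mult_self:
  "trace (cadj M ** M) = of_real (\<Sum>i\<in>UNIV. \<Sum>k\<in>UNIV. (cmod (M $ k $ i))\<^sup>2)"
proof -
  have "cnj z * z = of_real ((cmod z)\<^sup>2)" for z
    by (metis complex_norm_square mult.commute of_real_power)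
  then show ?thesis
    by (simp add: trace_def matrix_matrix_mult_def cadj_def of_real_sum)
qed

lemma Re_trace_cadj_mult_self_nonneg: "0 \<le> Re (trace (cadj M ** M))"
  by (simp add: trace_cadj_mult_self sum_nonneg)

lemma Re_trace_cadj_mult_self_eq_0_iff: "Re (trace (cadj M ** M)) = 0 \<longleftrightarrow> M = 0"
  by (auto simp add: trace_cadj_mult_self sum_nonneg_eq_0_iff sum_nonneg vec_eq_iff)

lemma cadj_mult_self_eq_0_iff: "cadj M ** M = 0 \<longleftrightarrow> M = 0"
  by (metis Re_trace_cadj_mult_self_eq_0_iff cadj_mult times0_right trace_0 mat_0 zero_complex.sel(1))

lemma mpow_gram_eq_gram:
  fixes A :: "complex^'n^'n"
  shows "\<exists>B::complex^'n^'n. mpow (cadj A ** A) k = cadj B ** B"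
proof -
  let ?P = "cadj A ** A"
  have hermitian: "cadj ?P = ?P" by (simp add: cadj_mult)
  obtain l where "k = 2 * l \<or> k = Suc (2 * l)" by (metis oddE evenE Suc_eq_plus1)
  then show ?thesis
  proof
    assume "k = 2 * l"
    then have "mpow ?P k = cadj (mpow ?P l) ** mpow ?P l"
      by (simp add: cadj_mpow hermitian mpow_add[symmetric] mult_2)
    then show ?thesis by blast
  next
    assume "k = Suc (2 * l)"
    then have "mpow ?P k = mpow ?P l ** ?P ** mpow ?P l"
      by (simp only: mult_2 mpow_add mpow_Suc_right flip: add_Suc)
    also have "\<dots> = cadj (A ** mpow ?P l) ** (A ** mpow ?P l)"
      by (simp add: cadj_mult cadj_mpow hermitian matrix_mul_assoc)
    finally show ?thesis by blast
  qed
qed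

lemma hermitian_mpow_mult_eq_0:
  assumes "cadj H = H" and "mpow H k ** X = 0"
  shows "H ** X = 0"
  using assms(2)
proof (induct k rule: less_induct)
  case (less k)
  consider "k = 0" | "k = 1" | j where "k = Suc (Suc j)"
    by (metis One_nat_def not0_implies_Suc)
  then show ?case
  proof cases
    case 3
    txt \<open>The Gram matrix of \<open>H^(k-1) X\<close> contains the factor \<open>H^k X = 0\<close>.\<close>
    let ?M = "mpow H (Suc j) ** X"
    have "cadj ?M ** ?M = cadj X ** (mpow H j ** mpow H (Suc (Suc j))) ** X"
      by (simp add: cadj_mult cadj_mpow assms(1) matrix_mul_assoc mpow_add[symmetric])
    then have "cadj ?M ** ?M = 0"
      using less.prems 3 by (simp add: matrix_mul_assoc[symmetric])
    then show ?thesis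
      using 3 by (intro less.hyps[of "Suc j"]) (simp_all add: cadj_mult_self_eq_0_iff)
  qed (use less.prems in simp_all)
qed

lemma mpow_diff_telescope:
  fixes P Q :: "complex^'n^'n"
  shows "mpow P n - mpow Q n = (\<Sum>k<n. mpow P k ** (P - Q) ** mpow Q (n - 1 - k))"
proof (induct n)
  case (Suc n)
  have "(\<Sum>k<n. mpow P k ** (P - Q) ** mpow Q (Suc n - 1 - k))
      = (\<Sum>k<n. mpow P k ** (P - Q) ** mpow Q (n - 1 - k)) ** Q"
  proof -
    have "mpow Q (n - k) = mpow Q (n - 1 - k) ** Q" if "k < n" for k
      using that by (metis Suc_diff_Suc diff_Suc_eq_diff_pred mpow_Suc_right)
    then show ?thesis
      by (simp add: matrix_sum_rdistrib matrix_mul_assoc)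
  qed
  then have "(\<Sum>k<Suc n. mpow P k ** (P - Q) ** mpow Q (Suc n - 1 - k))
      = (mpow P n - mpow Q n) ** Q + mpow P n ** (P - Q)"
    by (simp add: Suc)
  also have "\<dots> = mpow P (Suc n) - mpow Q (Suc n)"
    by (simp add: matrix_diff_ldistrib matrix_diff_rdistrib mpow_commute)
  finally show ?case ..
qed simp

lemma trace_gram_sandwich:
  assumes "cadj D = D"
  shows "trace (D ** (cadj A ** A ** D ** (cadj C ** C)))
    = trace (cadj (A ** D ** cadj C) ** (A ** D ** cadj C))"
proof -
  have "trace (D ** (cadj A ** A ** D ** (cadj C ** C)))
      = trace ((D ** cadj A ** A ** D ** cadj C) ** C)"
    by (simp add: matrix_mul_assoc)
  also have "\<dots> = trace (C ** (D ** cadj A ** A ** D ** cadj C))"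
    by (rule trace_mul_sym)
  finally show ?thesis
    by (simp add: cadj_mult assms matrix_mul_assoc)
qed

lemma gram_mpow_eq_imp_eq:
  fixes A C :: "complex^'n^'n"
  assumes "mpow (cadj A ** A) n = mpow (cadj C ** C) n" and "n \<ge> 1"
  shows "cadj A ** A = cadj C ** C"
proof -
  define P where "P = cadj A ** A"
  define Q where "Q = cadj C ** C"
  define D where "D = P - Q"
  have hermitian: "cadj P = P" "cadj Q = Q" "cadj D = D"
    by (simp_all add: P_def Q_def D_def cadj_mult cadj_diff)
  have term_nonneg: "0 \<le> Re (trace (D ** (mpow P k ** D ** mpow Q m)))"
    and term_vanishes: "Re (trace (D ** (mpow P k ** D ** mpow Q m))) = 0
      \<Longrightarrow> mpow P k ** D ** mpow Q m = 0"
    for k m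
  proof -
    obtain A' C' :: "complex^'n^'n"
      where A': "mpow P k = cadj A' ** A'" and C': "mpow Q m = cadj C' ** C'"
      unfolding P_def Q_def by (metis mpow_gram_eq_gram)
    note sandwich = trace_gram_sandwich[OF hermitian(3), of A' C', folded A' C']
    show "0 \<le> Re (trace (D ** (mpow P k ** D ** mpow Q m)))"
      by (simp only: sandwich Re_trace_cadj_mult_self_nonneg)
    assume "Re (trace (D ** (mpow P k ** D ** mpow Q m))) = 0"
    then have "A' ** D ** cadj C' = 0"
      by (simp only: sandwich Re_trace_cadj_mult_self_eq_0_iff)
    moreover have "mpow P k ** D ** mpow Q m = cadj A' ** (A' ** D ** cadj C') ** C'"
      by (simp add: A' C' matrix_mul_assoc)
    ultimately show "mpow P k ** D ** mpow Q m = 0"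
      by simp
  qed
  have "(\<Sum>k<n. Re (trace (D ** (mpow P k ** D ** mpow Q (n - 1 - k)))))
      = Re (trace (D ** (mpow P n - mpow Q n)))"
    by (simp add: mpow_diff_telescope D_def matrix_sum_ldistrib trace_sum flip: Re_sum)
  also have "\<dots> = 0"
    using assms(1) by (simp add: P_def Q_def trace_0[simplified])
  finally have vanish: "\<forall>k\<in>{..<n}. Re (trace (D ** (mpow P k ** D ** mpow Q (n - 1 - k)))) = 0"
    by (simp add: sum_nonneg_eq_0_iff term_nonneg)
  have "mpow P (n - 1) ** D ** mpow Q 0 = 0"
    using vanish[rule_format, of "n - 1"] assms(2) by (intro term_vanishes) simp
  moreover have "mpow P 0 ** D ** mpow Q (n - 1) = 0"
    using vanish[rule_format, of 0] assms(2) by (intro term_vanishes) simp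
  ultimately have "mpow P (n - 1) ** D = 0" and "cadj (D ** mpow Q (n - 1)) = 0"
    by simp_all
  then have "P ** D = 0" and "Q ** D = 0"
    by (auto intro: hermitian_mpow_mult_eq_0[OF hermitian(1)] hermitian_mpow_mult_eq_0[OF hermitian(2)]
        simp: cadj_mult cadj_mpow hermitian)
  moreover have "cadj D ** D = P ** D - Q ** D"
    unfolding hermitian(3) by (metis D_def matrix_diff_rdistrib)
  ultimately have "cadj D ** D = 0"
    by simp
  then show ?thesis
    by (simp add: cadj_mult_self_eq_0_iff D_def P_def Q_def)
qed

lemma normal_mat_iff_mpow_eq:
  assumes "n \<ge> 1"
  shows "normal_mat v \<longleftrightarrow> mpow (cadj v ** v) n = mpow (v ** cadj v) n"
  using gram_mpow_eq_imp_eq[OF _ assms, of v "cadj v"] by (auto simp: normal_mat_def)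

section \<open>The Euler--Lagrange equation along one-parameter subgroups\<close>

lemma has_vector_derivative_const_iff:
  assumes "a < b" and "t \<in> {a..b}"
  shows "((\<lambda>s. c) has_vector_derivative d) (at t within {a..b}) \<longleftrightarrow> d = 0"
proof
  assume "((\<lambda>s. c) has_vector_derivative d) (at t within {a..b})"
  then show "d = 0"
    using vector_derivative_unique_within_closed_interval[of a b t "\<lambda>s. c" d 0] assms
    by (simp add: has_vector_derivative_const)
qed (simp add: has_vector_derivative_const)

lemma pEL_iff_of_left_vel_const:
  assumes "\<And>t. t \<in> {0..1} \<Longrightarrow> left_vel g t = w"
  shows "pEL n g \<longleftrightarrow> mpow (cadj w ** w) n = mpow (w ** cadj w) n"
proof -
  let ?F = "\<lambda>s. left_vel g s ** mpow (cadj (left_vel g s) ** left_vel g s) (n - 1)"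
  let ?c = "w ** mpow (cadj w ** w) (n - 1)"
  have "(?F has_vector_derivative d) (at t within {0..1}) \<longleftrightarrow> d = 0"
    if t: "t \<in> {0..1}" for t d
  proof -
    have "(?F has_vector_derivative d) (at t within {0..1})
        \<longleftrightarrow> ((\<lambda>s. ?c) has_vector_derivative d) (at t within {0..1})"
      using assms t by (intro has_vector_derivative_cong_ev always_eventually) simp_all
    also have "\<dots> \<longleftrightarrow> d = 0"
      using t by (intro has_vector_derivative_const_iff) simp_all
    finally show ?thesis .
  qed
  then show ?thesis
    unfolding pEL_def by (auto simp: assms intro: bexI[of _ 0])
qed

theorem mainTheorem1:
  fixes v :: "complex^'N^'N" and n :: nat
  assumes "n \<ge> 1"
  shows "pEL n (\<lambda>t. mexp (t *\<^sub>R v)) \<longleftrightarrow> normal_mat v"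
  unfolding normal_mat_iff_mpow_eq[OF assms]
  by (rule pEL_iff_of_left_vel_const) (rule left_vel_mexp_scaleR)

end
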